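(* Let the EC fluctuations $\mathbf{D}^\pm_{EC}$ satisfy conditions (C1)–(C5) below, and consider the flux differencing nonconservative DGSEM $$\omega_i\frac{\Delta x_k}{2}\dot{\mathbf{U}}^k_i+\omega_i\sum_{m=0}^N 2\mathcal{D}_{im}\mathbf{D}^-_{EC}(\mathbf{U}^k_i,\mathbf{U}^k_m)+\delta_{i0}\mathbf{D}^+_{EC}(\mathbf{U}^{k-1}_N,\mathbf{U}^k_0)+\delta_{iN}\mathbf{D}^-_{EC}(\mathbf{U}^k_N,\mathbf{U}^{k+1}_0)=0,\quad i=0,\dots,N,$$ on an element $\Omega^k$ with neighbors $\Omega^{k-1},\Omega^{k+1}$. Assume the semidiscrete solution is differentiable in time so that $\mathbf{w}(\mathbf{U}_i^k)^T\dot{\mathbf{U}}_i^k=\frac{d}{dt}S(\mathbf{U}_i^k)$. Then $$\sum_{i=0}^N\omega_i\frac{\Delta x_k}{2}\frac{d S(\mathbf{U}^k_i)}{dt}=\mathcal{F}(\mathbf{U}^{k-1}_N,\mathbf{U}^k_0)-\mathcal{F}(\mathbf{U}^k_N,\mathbf{U}^{k+1}_0),$$ where the numerical entropy flux $\mathcal{F}(\mathbf{u}_L,\mathbf{u}_R):=q(\mathbf{u}_L)+\mathbf{w}(\mathbf{u}_L)^T\mathbf{D}^-_{EC}(\mathbf{u}_L,\mathbf{u}_R)=q(\mathbf{u}_R)-\mathbf{w}(\mathbf{u}_R)^T\mathbf{D}^+_{EC}(\mathbf{u}_L,\mathbf{u}_R)$ is consistent, $\mathcal{F}(\mathbf{u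},\mathbf{u})=q(\mathbf{u})$.
   Context: System: $\mathbf{u}_t+\mathbf{f}(\mathbf{u})_x+\mathbf{B}(\mathbf{u})\mathbf{u}_x=0$, $\mathbf{u}\in\mathcal{U}\subset\mathbb{R}^n$, generalized Jacobian $\mathbf{A}:=\mathbf{f}_{\mathbf{u}}+\mathbf{B}$. Entropy pair: a strictly convex $C^2$ function $S:\mathcal{U}\to\mathbb{R}$ and entropy flux $q:\mathcal{U}\to\mathbb{R}$ with $q_{\mathbf{u}}=\mathbf{w}^T(\mathbf{f}_{\mathbf{u}}+\mathbf{B})$, where $\mathbf{w}(\mathbf{u}):=S_{\mathbf{u}}(\mathbf{u})$ are the entropy variables. Write $\mathbf{w}_L=\mathbf{w}(\mathbf{u}_L)$, $q_L=q(\mathbf{u}_L)$, etc. A family of paths is a Lipschitz map $\Phi(s;\mathbf{u}_L,\mathbf{u}_R)\in\mathcal{U}$, $s\in[0,1]$, with $\Phi(0;\mathbf{u}_L,\mathbf{u}_R)=\mathbf{u}_L$, $\Phi(1;\mathbf{u}_L,\mathbf{u}_R)=\mathbf{u}_R$, $\Phi(s;\mathbf{u},\mathbf{u})=\mathbf{u}$. Fluctuations $\mathbf{D}^\pm:\mathcal{U}\times\mathcal{U}\to\mathbb{R}^n$ (Lipschitz) are called entropy conservative (EC), written $\mathbf{D}^\pm_{EC}$, if for all $\mathbf{u},\mathbf{u}_L,\mathbf{u}_R$: (C1) $\mathbf{D}^\pm(\mathbf{u},\mathbf{u})=0$; (C2) $\mathbf{D}^-(\mathbf{u}_L,\mathbf{u}_R)+\mathbf{D}^+(\mathbf{u}_L,\mathbf{u}_R)=\int_0^1\mathbf{A}(\Phi(s;\mathbf{u}_L,\mathbf{u}_R))\partial_s\Phi(s;\mathbf{u}_L,\mathbf{u}_R)\,ds$;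 (C3) $\mathbf{D}^-(\mathbf{u}_L,\mathbf{u}_R)+\mathbf{D}^+(\mathbf{u}_R,\mathbf{u}_L)=0$; (C4) $\mathbf{w}_L^T\mathbf{D}^-(\mathbf{u}_L,\mathbf{u}_R)+\mathbf{w}_R^T\mathbf{D}^+(\mathbf{u}_L,\mathbf{u}_R)=q_R-q_L$; (C5) $\frac{\partial\mathbf{D}^-(\mathbf{u}_L,\mathbf{u}_R)}{\partial\mathbf{u}_R}\big|_{\mathbf{u}_R=\mathbf{u}_L}=\frac12\mathbf{A}(\mathbf{u}_L)$. Discretization: the domain is split into elements $\Omega^k=[x_{k-1},x_k]$ of width $\Delta x_k$, each mapped affinely to $[-1,1]$. On each element the solution is a polynomial of degree $N$ with nodal values $\mathbf{U}^k_i\in\mathcal{U}$ at the LGL nodes $-1=\xi_0<\dots<\xi_N=1$ with LGL quadrature weights $\omega_i>0$; $\mathcal{D}_{ij}=l_j'(\xi_i)$ is the differentiation matrix of the Lagrange basis $l_j$ on these nodes. These operators satisfy the summation-by-parts property $\mathcal{Q}+\mathcal{Q}^T=\mathcal{B}$ with $\mathcal{Q}_{ij}=\omega_i\mathcal{D}_{ij}$ and $\mathcal{B}_{ij}=\delta_{iN}\delta_{jN}-\delta_{i0}\delta_{j0}$; also $\sum_j\mathcal{D}_{ij}=0$. $\delta$ denotes the Kronecker delta. *)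

theory Defs
  imports "HOL-Analysis.Analysis" "HOL-Computational_Algebra.Polynomial"
begin

definition strictly_convex_on :: "('a::real_vector) set \<Rightarrow> ('a \<Rightarrow> real) \<Rightarrow> bool" where
  "strictly_convex_on X F \<longleftrightarrow>
     (\<forall>x\<in>X. \<forall>y\<in>X. \<forall>a::real. x \<noteq> y \<and> 0 < a \<and> a < 1 \<and> a *\<^sub>R x + (1 - a) *\<^sub>R y \<in> X \<longrightarrow>
        F (a *\<^sub>R x + (1 - a) *\<^sub>R y) < a * F x + (1 - a) * F y)"

definition kron :: "nat \<Rightarrow> nat \<Rightarrow> real" where
  "kron i j = (if i = j then 1 else 0)"

text \<open>Legendre-Gauss-Lobatto nodes and weights of degree N (N+1 points):
  strictly increasing nodes with xi 0 = -1, xi N = 1, positive weights, and the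
  quadrature is exact for all polynomials of degree at most 2N-1
  (this characterises the LGL rule uniquely).\<close>
definition LGL :: "nat \<Rightarrow> (nat \<Rightarrow> real) \<Rightarrow> (nat \<Rightarrow> real) \<Rightarrow> bool" where
  "LGL N \<xi> \<omega> \<longleftrightarrow> 1 \<le> N \<and> \<xi> 0 = -1 \<and> \<xi> N = 1 \<and>
     (\<forall>i<N. \<xi> i < \<xi> (Suc i)) \<and> (\<forall>i\<le>N. 0 < \<omega> i) \<and>
     (\<forall>p::real poly. degree p \<le> 2 * N - 1 \<longrightarrow>
        (\<Sum>i\<le>N. \<omega> i * poly p (\<xi> i)) = integral {-1..1} (poly p))"

definition lagrange_basis :: "nat \<Rightarrow> (nat \<Rightarrow> real) \<Rightarrow> nat \<Rightarrow> real \<Rightarrow> real" where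
  "lagrange_basis N \<xi> j x = (\<Prod>m\<in>{0..N} - {j}. (x - \<xi> m) / (\<xi> j - \<xi> m))"

definition diff_matrix :: "nat \<Rightarrow> (nat \<Rightarrow> real) \<Rightarrow> nat \<Rightarrow> nat \<Rightarrow> real" where
  "diff_matrix N \<xi> i j = deriv (lagrange_basis N \<xi> j) (\<xi> i)"

definition num_entropy_flux ::
  "('v \<Rightarrow> real) \<Rightarrow> ('v \<Rightarrow> 'v::real_inner) \<Rightarrow> ('v \<Rightarrow> 'v \<Rightarrow> 'v) \<Rightarrow> 'v \<Rightarrow> 'v \<Rightarrow> real" where
  "num_entropy_flux q w Dm uL uR = q uL + w uL \<bullet> Dm uL uR"

end

theory Submission
  imports Defs
begin

text \<open>Taking the inner product of the nodal equation at node i with w(U_i) turns the time term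
  into the weighted entropy rate. With Q_im = \<omega>_i D_im and a_im = w(U_i)\<bullet>D^-(U_i,U_m),
  the SBP property Q + Q^T = B and a_ii = 0 (C1) make the volume term skew, so
  2 \<Sigma> Q_im a_im = \<Sigma> Q_im (a_im - a_mi); by (C3) and (C4) a_im - a_mi = q(U_m) - q(U_i), and
  zero row sums together with the column sums forced by SBP collapse this to q(U_N) - q(U_0).
  The interface fluctuations combine with q(U_0) and q(U_N), again via (C4), into the
  numerical entropy fluxes.\<close>

lemma sum_kron_times: "j \<le> N \<Longrightarrow> (\<Sum>i\<le>N. kron i j * c i) = c j"
  by (simp add: kron_def if_distrib[of "\<lambda>x. x * _"] sum.delta' cong: if_cong)

lemma sum_kron: "j \<le> N \<Longrightarrow> (\<Sum>i\<le>N. kron i j) = 1"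
  using sum_kron_times[of j N "\<lambda>_. 1"] by simp

lemma sum_sbp_boundary:
  "(\<Sum>i\<le>N. \<Sum>m\<le>N. (kron i N * kron m N - kron i 0 * kron m 0) * a i m) = a N N - a 0 0"
  by (simp add: left_diff_distrib sum_subtractf mult.assoc sum_kron_times flip: sum_distrib_left)

lemma sbp_column_sum:
  fixes Q :: "nat \<Rightarrow> nat \<Rightarrow> real"
  assumes sbp: "\<And>i j. i \<le> N \<Longrightarrow> j \<le> N \<Longrightarrow> Q i j + Q j i = kron i N * kron j N - kron i 0 * kron j 0"
    and row_sum: "\<And>i. i \<le> N \<Longrightarrow> (\<Sum>j\<le>N. Q i j) = 0"
    and "m \<le> N"
  shows "(\<Sum>i\<le>N. Q i m) = kron m N - kron m 0"
proof -
  have "(\<Sum>i\<le>N. Q i m) = (\<Sum>i\<le>N. kron i N * kron m N - kron i 0 * kron m 0 - Q m i)"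
    using sbp \<open>m \<le> N\<close> by (intro sum.cong) (auto simp: algebra_simps)
  also have "\<dots> = kron m N - kron m 0"
    using row_sum[OF \<open>m \<le> N\<close>]
    by (simp add: sum_subtractf sum_kron flip: sum_distrib_right)
  finally show ?thesis .
qed

lemma sbp_double_sum_skew:
  fixes Q a :: "nat \<Rightarrow> nat \<Rightarrow> real"
  assumes sbp: "\<And>i j. i \<le> N \<Longrightarrow> j \<le> N \<Longrightarrow> Q i j + Q j i = kron i N * kron j N - kron i 0 * kron j 0"
  shows "(\<Sum>i\<le>N. \<Sum>m\<le>N. Q i m * a i m) = a N N - a 0 0 - (\<Sum>i\<le>N. \<Sum>m\<le>N. Q i m * a m i)"
proof -
  have "(\<Sum>i\<le>N. \<Sum>m\<le>N. Q i m * a i m)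
      = (\<Sum>i\<le>N. \<Sum>m\<le>N. (kron i N * kron m N - kron i 0 * kron m 0) * a i m - Q m i * a i m)"
    using sbp by (intro sum.cong refl) (simp add: algebra_simps flip: sbp)
  also have "\<dots> = a N N - a 0 0 - (\<Sum>i\<le>N. \<Sum>m\<le>N. Q m i * a i m)"
    by (simp add: sum_subtractf sum_sbp_boundary)
  also have "(\<Sum>i\<le>N. \<Sum>m\<le>N. Q m i * a i m) = (\<Sum>i\<le>N. \<Sum>m\<le>N. Q i m * a m i)"
    by (rule sum.swap)
  finally show ?thesis .
qed

lemma sbp_flux_differencing_telescopes:
  fixes Q a :: "nat \<Rightarrow> nat \<Rightarrow> real" and p :: "nat \<Rightarrow> real"
  assumes sbp: "\<And>i j. i \<le> N \<Longrightarrow> j \<le> N \<Longrightarrow> Q i j + Q j i = kron i N * kron j N - kron i 0 * kron j 0"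
    and row_sum: "\<And>i. i \<le> N \<Longrightarrow> (\<Sum>j\<le>N. Q i j) = 0"
    and diag: "\<And>i. i \<le> N \<Longrightarrow> a i i = 0"
    and potential: "\<And>i m. i \<le> N \<Longrightarrow> m \<le> N \<Longrightarrow> a i m - a m i = p m - p i"
  shows "(\<Sum>i\<le>N. \<Sum>m\<le>N. 2 * Q i m * a i m) = p N - p 0"
proof -
  have skew: "(\<Sum>i\<le>N. \<Sum>m\<le>N. Q i m * a i m) = - (\<Sum>i\<le>N. \<Sum>m\<le>N. Q i m * a m i)"
    using sbp_double_sum_skew[OF sbp, of a] diag by simp
  have "(\<Sum>i\<le>N. \<Sum>m\<le>N. 2 * Q i m * a i m)
      = (\<Sum>i\<le>N. \<Sum>m\<le>N. Q i m * a i m) + (\<Sum>i\<le>N. \<Sum>m\<le>N. Q i m * a i m)"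
    by (simp add: algebra_simps flip: sum.distrib)
  also have "\<dots> = (\<Sum>i\<le>N. \<Sum>m\<le>N. Q i m * (a i m - a m i))"
    by (subst (2) skew) (simp add: right_diff_distrib sum_subtractf)
  also have "\<dots> = (\<Sum>i\<le>N. \<Sum>m\<le>N. Q i m * p m) - (\<Sum>i\<le>N. p i * (\<Sum>m\<le>N. Q i m))"
    by (simp add: potential right_diff_distrib sum_subtractf sum_distrib_left mult.commute)
  also have "\<dots> = (\<Sum>m\<le>N. (\<Sum>i\<le>N. Q i m) * p m)"
    by (simp add: row_sum sum_distrib_right) (rule sum.swap)
  also have "\<dots> = (\<Sum>m\<le>N. (kron m N - kron m 0) * p m)"
    by (intro sum.cong refl) (simp add: sbp_column_sum[OF sbp row_sum])
  also have "\<dots> = p N - p 0"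
    by (simp add: left_diff_distrib sum_subtractf sum_kron_times)
  finally show ?thesis .
qed

lemma flux_differencing_entropy_balance:
  fixes u v :: "nat \<Rightarrow> 'a::real_inner" and uL uR :: 'a
    and w :: "'a \<Rightarrow> 'a" and q :: "'a \<Rightarrow> real" and Dm Dp :: "'a \<Rightarrow> 'a \<Rightarrow> 'a"
    and D :: "nat \<Rightarrow> nat \<Rightarrow> real" and \<omega> M :: "nat \<Rightarrow> real"
  assumes sbp: "\<And>i j. i \<le> N \<Longrightarrow> j \<le> N \<Longrightarrow>
        \<omega> i * D i j + \<omega> j * D j i = kron i N * kron j N - kron i 0 * kron j 0"
    and row_sum: "\<And>i. i \<le> N \<Longrightarrow> (\<Sum>j\<le>N. D i j) = 0"
    and Dm_diag: "\<And>u. u \<in> \<U> \<Longrightarrow> Dm u u = 0"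
    and Dm_Dp_swap: "\<And>uL uR. uL \<in> \<U> \<Longrightarrow> uR \<in> \<U> \<Longrightarrow> Dm uL uR + Dp uR uL = 0"
    and entropy_conservative: "\<And>uL uR. uL \<in> \<U> \<Longrightarrow> uR \<in> \<U> \<Longrightarrow>
        w uL \<bullet> Dm uL uR + w uR \<bullet> Dp uL uR = q uR - q uL"
    and u_in: "\<And>i. i \<le> N \<Longrightarrow> u i \<in> \<U>" and uL_in: "uL \<in> \<U>"
    and scheme: "\<And>i. i \<le> N \<Longrightarrow>
        M i *\<^sub>R v i + \<omega> i *\<^sub>R (\<Sum>m\<le>N. (2 * D i m) *\<^sub>R Dm (u i) (u m))
        + kron i 0 *\<^sub>R Dp uL (u 0) + kron i N *\<^sub>R Dm (u N) uR = 0"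
  shows "(\<Sum>i\<le>N. M i * (w (u i) \<bullet> v i))
           = num_entropy_flux q w Dm uL (u 0) - num_entropy_flux q w Dm (u N) uR"
proof -
  define a where "a i m = w (u i) \<bullet> Dm (u i) (u m)" for i m
  define left where "left = w (u 0) \<bullet> Dp uL (u 0)"
  define right where "right = w (u N) \<bullet> Dm (u N) uR"
  have node: "M i * (w (u i) \<bullet> v i)
      = - (\<Sum>m\<le>N. 2 * (\<omega> i * D i m) * a i m) - kron i 0 * left - kron i N * right"
    if "i \<le> N" for i
  proof -
    have "w (u i) \<bullet> (M i *\<^sub>R v i + \<omega> i *\<^sub>R (\<Sum>m\<le>N. (2 * D i m) *\<^sub>R Dm (u i) (u m))
        + kron i 0 *\<^sub>R Dp uL (u 0) + kron i N *\<^sub>R Dm (u N) uR) = 0"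
      by (simp add: scheme[OF that])
    moreover have "kron i 0 * (w (u i) \<bullet> Dp uL (u 0)) = kron i 0 * left"
      and "kron i N * (w (u i) \<bullet> Dm (u N) uR) = kron i N * right"
      by (simp_all add: kron_def left_def right_def)
    ultimately show ?thesis
      by (simp add: inner_sum_right sum_distrib_left a_def algebra_simps)
  qed
  have volume: "(\<Sum>i\<le>N. \<Sum>m\<le>N. 2 * (\<omega> i * D i m) * a i m) = q (u N) - q (u 0)"
  proof (rule sbp_flux_differencing_telescopes)
    show "(\<Sum>j\<le>N. \<omega> i * D i j) = 0" if "i \<le> N" for i
      by (simp add: row_sum[OF that] flip: sum_distrib_left)
    show "a i i = 0" if "i \<le> N" for i
      by (simp add: a_def Dm_diag u_in[OF that])
    show "a i m - a m i = q (u m) - q (u i)" if "i \<le> N" "m \<le> N" for i m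
    proof -
      have "Dm (u m) (u i) = - Dp (u i) (u m)"
        using Dm_Dp_swap[OF u_in[OF that(2)] u_in[OF that(1)]] by (simp add: eq_neg_iff_add_eq_0)
      then show ?thesis
        using entropy_conservative[OF u_in[OF that(1)] u_in[OF that(2)]] by (simp add: a_def)
    qed
  qed (use sbp in simp)
  have "(\<Sum>i\<le>N. M i * (w (u i) \<bullet> v i)) = - (q (u N) - q (u 0)) - left - right"
    using sum_kron_times[of 0 N "\<lambda>_. left"] sum_kron_times[of N N "\<lambda>_. right"]
    by (simp add: node sum_subtractf sum_negf volume)
  also have "\<dots> = num_entropy_flux q w Dm uL (u 0) - num_entropy_flux q w Dm (u N) uR"
    using entropy_conservative[OF uL_in u_in[of 0]]
    by (simp add: num_entropy_flux_def left_def right_def)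
  finally show ?thesis .
qed

lemma deriv_compose_gradient:
  fixes S :: "'a::real_inner \<Rightarrow> real"
  assumes "(S has_derivative (\<lambda>h. g \<bullet> h)) (at (x t))"
    and "(x has_vector_derivative x') (at t)"
  shows "deriv (\<lambda>\<tau>. S (x \<tau>)) t = g \<bullet> x'"
proof (rule DERIV_imp_deriv)
  have "((\<lambda>\<tau>. S (x \<tau>)) has_derivative (\<lambda>h. g \<bullet> (h *\<^sub>R x'))) (at t)"
    using diff_chain_at[OF assms(2)[unfolded has_vector_derivative_def] assms(1)]
    by (simp add: o_def)
  then show "((\<lambda>\<tau>. S (x \<tau>)) has_real_derivative g \<bullet> x') (at t)"
    by (simp add: has_field_derivative_def mult_commute_abs)
qed

theorem lemma2:
  fixes \<U> :: "(real^'n) set"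
    and f :: "real^'n \<Rightarrow> real^'n" and Df :: "real^'n \<Rightarrow> real^'n^'n"
    and B :: "real^'n \<Rightarrow> real^'n^'n"
    and S :: "real^'n \<Rightarrow> real" and q :: "real^'n \<Rightarrow> real"
    and w :: "real^'n \<Rightarrow> real^'n" and Hw :: "real^'n \<Rightarrow> real^'n^'n"
    and \<Phi> :: "real \<Rightarrow> real^'n \<Rightarrow> real^'n \<Rightarrow> real^'n"
    and Dm Dp :: "real^'n \<Rightarrow> real^'n \<Rightarrow> real^'n"
    and N :: nat and \<xi> \<omega> :: "nat \<Rightarrow> real" and \<Delta>x :: real
    and U :: "real \<Rightarrow> nat \<Rightarrow> real^'n" and Ul Ur :: "real \<Rightarrow> real^'n"
    and U' :: "nat \<Rightarrow> real^'n" and t :: real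
  assumes open_U: "open \<U>"
    \<comment> \<open>flux Jacobian f_u and generalized Jacobian A = f_u + B\<close>
    and f_deriv: "\<And>u. u \<in> \<U> \<Longrightarrow> (f has_derivative (\<lambda>h. Df u *v h)) (at u)"
    \<comment> \<open>entropy pair: S strictly convex, C^2, with gradient w (entropy variables)\<close>
    and S_convex: "strictly_convex_on \<U> S"
    and S_grad: "\<And>u. u \<in> \<U> \<Longrightarrow> (S has_derivative (\<lambda>h. w u \<bullet> h)) (at u)"
    and w_C1: "\<And>u. u \<in> \<U> \<Longrightarrow> (w has_derivative (\<lambda>h. Hw u *v h)) (at u)"
    and Hw_cont: "continuous_on \<U> Hw"
    and q_deriv: "\<And>u. u \<in> \<U> \<Longrightarrow>
        (q has_derivative (\<lambda>h. w u \<bullet> ((Df u + B u) *v h))) (at u)"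
    \<comment> \<open>family of paths\<close>
    and Phi_lip: "\<exists>L. L-lipschitz_on ({0..1} \<times> (\<U> \<times> \<U>)) (\<lambda>(s, uL, uR). \<Phi> s uL uR)"
    and Phi_in: "\<And>s uL uR. s \<in> {0..1} \<Longrightarrow> uL \<in> \<U> \<Longrightarrow> uR \<in> \<U> \<Longrightarrow> \<Phi> s uL uR \<in> \<U>"
    and Phi_0: "\<And>uL uR. uL \<in> \<U> \<Longrightarrow> uR \<in> \<U> \<Longrightarrow> \<Phi> 0 uL uR = uL"
    and Phi_1: "\<And>uL uR. uL \<in> \<U> \<Longrightarrow> uR \<in> \<U> \<Longrightarrow> \<Phi> 1 uL uR = uR"
    and Phi_diag: "\<And>s u. s \<in> {0..1} \<Longrightarrow> u \<in> \<U> \<Longrightarrow> \<Phi> s u u = u"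
    \<comment> \<open>entropy conservative fluctuations\<close>
    and Dm_lip: "\<exists>L. L-lipschitz_on (\<U> \<times> \<U>) (\<lambda>(uL, uR). Dm uL uR)"
    and Dp_lip: "\<exists>L. L-lipschitz_on (\<U> \<times> \<U>) (\<lambda>(uL, uR). Dp uL uR)"
    and C1: "\<And>u. u \<in> \<U> \<Longrightarrow> Dm u u = 0 \<and> Dp u u = 0"
    and C2: "\<And>uL uR. uL \<in> \<U> \<Longrightarrow> uR \<in> \<U> \<Longrightarrow>
        Dm uL uR + Dp uL uR =
        integral {0..1} (\<lambda>s. (Df (\<Phi> s uL uR) + B (\<Phi> s uL uR)) *v
                              vector_derivative (\<lambda>r. \<Phi> r uL uR) (at s))"
    and C3: "\<And>uL uR. uL \<in> \<U> \<Longrightarrow> uR \<in> \<U> \<Longrightarrow> Dm uL uR + Dp uR uL = 0"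
    and C4: "\<And>uL uR. uL \<in> \<U> \<Longrightarrow> uR \<in> \<U> \<Longrightarrow>
        w uL \<bullet> Dm uL uR + w uR \<bullet> Dp uL uR = q uR - q uL"
    and C5: "\<And>uL. uL \<in> \<U> \<Longrightarrow>
        ((\<lambda>uR. Dm uL uR) has_derivative (\<lambda>h. (1/2) *\<^sub>R ((Df uL + B uL) *v h))) (at uL)"
    \<comment> \<open>LGL discretization, with its SBP properties\<close>
    and lgl: "LGL N \<xi> \<omega>"
    and SBP: "\<And>i j. i \<le> N \<Longrightarrow> j \<le> N \<Longrightarrow>
        \<omega> i * diff_matrix N \<xi> i j + \<omega> j * diff_matrix N \<xi> j i
          = kron i N * kron j N - kron i 0 * kron j 0"
    and rowsum: "\<And>i. i \<le> N \<Longrightarrow> (\<Sum>j\<le>N. diff_matrix N \<xi> i j) = 0"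
    and dx_pos: "0 < \<Delta>x"
    \<comment> \<open>semidiscrete solution on element k and neighbouring traces at time t\<close>
    and U_in: "\<And>i. i \<le> N \<Longrightarrow> U t i \<in> \<U>"
    and Ul_in: "Ul t \<in> \<U>" and Ur_in: "Ur t \<in> \<U>"
    and U_diff: "\<And>i. i \<le> N \<Longrightarrow> ((\<lambda>\<tau>. U \<tau> i) has_vector_derivative U' i) (at t)"
    and scheme: "\<And>i. i \<le> N \<Longrightarrow>
        (\<omega> i * (\<Delta>x / 2)) *\<^sub>R U' i
        + \<omega> i *\<^sub>R (\<Sum>m\<le>N. (2 * diff_matrix N \<xi> i m) *\<^sub>R Dm (U t i) (U t m))
        + kron i 0 *\<^sub>R Dp (Ul t) (U t 0)
        + kron i N *\<^sub>R Dm (U t N) (Ur t) = 0"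
  shows "(\<Sum>i\<le>N. \<omega> i * (\<Delta>x / 2) * deriv (\<lambda>\<tau>. S (U \<tau> i)) t)
           = num_entropy_flux q w Dm (Ul t) (U t 0) - num_entropy_flux q w Dm (U t N) (Ur t)
         \<and> (\<forall>uL\<in>\<U>. \<forall>uR\<in>\<U>. num_entropy_flux q w Dm uL uR = q uR - w uR \<bullet> Dp uL uR)
         \<and> (\<forall>u\<in>\<U>. num_entropy_flux q w Dm u u = q u)"
proof -
  have flux_right: "\<forall>uL\<in>\<U>. \<forall>uR\<in>\<U>. num_entropy_flux q w Dm uL uR = q uR - w uR \<bullet> Dp uL uR"
    using C4 by (auto simp: num_entropy_flux_def algebra_simps)
  have consistent: "\<forall>u\<in>\<U>. num_entropy_flux q w Dm u u = q u"
    using C1 by (simp add: num_entropy_flux_def)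
  have "(\<Sum>i\<le>N. \<omega> i * (\<Delta>x / 2) * deriv (\<lambda>\<tau>. S (U \<tau> i)) t)
      = (\<Sum>i\<le>N. \<omega> i * (\<Delta>x / 2) * (w (U t i) \<bullet> U' i))"
    using deriv_compose_gradient[OF S_grad[OF U_in] U_diff] by simp
  also have "\<dots> = num_entropy_flux q w Dm (Ul t) (U t 0) - num_entropy_flux q w Dm (U t N) (Ur t)"
    by (rule flux_differencing_entropy_balance[where \<U> = \<U> and D = "diff_matrix N \<xi>"])
       (use SBP rowsum C1 C3 C4 U_in Ul_in scheme in auto)
  finally show ?thesis
    using flux_right consistent by blast
qed

end
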